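(* Let $C\subseteq\mathbb{R}^2$ be a strictly convex closed differentiable planar curve, equipped with the Euclidean metric and its natural cyclic order. If the convex hull of $C$ contains the evolute of $C$, then for every $r\ge 0$ the 1-skeleton of the Vietoris--Rips complex $\mathrm{VR}(C;r)$ is a cyclic graph or a cone.
   Context: A curve $C\subseteq\mathbb{R}^2$ is strictly convex if $C=\partial Y$ for some set $Y\subseteq\mathbb{R}^2$ such that for all $y,y'\in Y$ and $t\in(0,1)$, the point $ty+(1-t)y'$ lies in the interior of $Y$. For a differentiable parametrization $\alpha$ of $C$, the unit tangent is $T=\alpha'/\|\alpha'\|$, the unit normal is $n=T'/\|T'\|$, the curvature is $\kappa=\|T'\|/\|\alpha'\|$, and the center of curvature at time $t$ is $\alpha(t)+\frac{1}{\kappa(t)}n(\alpha(t))$. The evolute of $C$ is the set of all centers of curvature (equivalently, the envelope of the normal lines). The Vietoris--Rips complex $\mathrm{VR}(X;r)$ has as simplices the finite subsets of $X$ of diameter at most $r$; its 1-skeleton joins distinct $x,y$ when $\|x-y\|\le r$. A graph is a cone if some vertex shares an edge with every other vertex. A cyclic graph is a directed graph (no loops, multiple edges, or oppositely oriented edge pairs) whose vertex set carries a cyclic order such that whenever $x\prec y\prec z\prec x$ and $x\to z$ is an edge, then $x\to y$ and $y\to z$ are edges. *)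

theory Defs
  imports "HOL-Analysis.Analysis"
begin

type_synonym pt = "real^2"

definition strictly_convex_curve :: "pt set \<Rightarrow> bool" where
  "strictly_convex_curve C \<longleftrightarrow>
     (\<exists>Y. C = frontier Y \<and>
        (\<forall>y\<in>Y. \<forall>y'\<in>Y. \<forall>t::real. 0 < t \<and> t < 1 \<longrightarrow> t *\<^sub>R y + (1 - t) *\<^sub>R y' \<in> interior Y))"

definition closed_param :: "(real \<Rightarrow> pt) \<Rightarrow> real \<Rightarrow> bool" where
  "closed_param \<alpha> L \<longleftrightarrow> 0 < L \<and> (\<forall>t. \<alpha> (t + L) = \<alpha> t) \<and> inj_on \<alpha> {0..<L}"

definition unit_tangent :: "(real \<Rightarrow> pt) \<Rightarrow> real \<Rightarrow> pt" where
  "unit_tangent \<alpha> t = (1 / norm (vector_derivative \<alpha> (at t))) *\<^sub>R vector_derivative \<alpha> (at t)"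

definition unit_normal :: "(real \<Rightarrow> pt) \<Rightarrow> real \<Rightarrow> pt" where
  "unit_normal \<alpha> t = (1 / norm (vector_derivative (unit_tangent \<alpha>) (at t)))
                         *\<^sub>R vector_derivative (unit_tangent \<alpha>) (at t)"

definition curvature :: "(real \<Rightarrow> pt) \<Rightarrow> real \<Rightarrow> real" where
  "curvature \<alpha> t = norm (vector_derivative (unit_tangent \<alpha>) (at t)) / norm (vector_derivative \<alpha> (at t))"

definition center_of_curvature :: "(real \<Rightarrow> pt) \<Rightarrow> real \<Rightarrow> pt" where
  "center_of_curvature \<alpha> t = \<alpha> t + (1 / curvature \<alpha> t) *\<^sub>R unit_normal \<alpha> t"

definition evolute :: "(real \<Rightarrow> pt) \<Rightarrow> pt set" where
  "evolute \<alpha> = range (center_of_curvature \<alpha>)"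

definition cyc_order :: "(real \<Rightarrow> pt) \<Rightarrow> real \<Rightarrow> pt \<Rightarrow> pt \<Rightarrow> pt \<Rightarrow> bool" where
  "cyc_order \<alpha> L x y z \<longleftrightarrow>
     (\<exists>s t u. s < t \<and> t < u \<and> u < s + L \<and> \<alpha> s = x \<and> \<alpha> t = y \<and> \<alpha> u = z)"

text \<open>1-skeleton of VR(X;r), as an adjacency relation on X.\<close>
definition VR_edge :: "pt set \<Rightarrow> real \<Rightarrow> pt \<Rightarrow> pt \<Rightarrow> bool" where
  "VR_edge X r x y \<longleftrightarrow> x \<in> X \<and> y \<in> X \<and> x \<noteq> y \<and> dist x y \<le> r"

definition cyclic_digraph :: "'a set \<Rightarrow> ('a \<Rightarrow> 'a \<Rightarrow> 'a \<Rightarrow> bool) \<Rightarrow> ('a \<Rightarrow> 'a \<Rightarrow> bool) \<Rightarrow> bool" where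
  "cyclic_digraph V cyc D \<longleftrightarrow>
     (\<forall>x y. D x y \<longrightarrow> x \<in> V \<and> y \<in> V \<and> x \<noteq> y \<and> \<not> D y x) \<and>
     (\<forall>x\<in>V. \<forall>y\<in>V. \<forall>z\<in>V. cyc x y z \<and> D x z \<longrightarrow> D x y \<and> D y z)"

definition is_cyclic_graph :: "'a set \<Rightarrow> ('a \<Rightarrow> 'a \<Rightarrow> 'a \<Rightarrow> bool) \<Rightarrow> ('a \<Rightarrow> 'a \<Rightarrow> bool) \<Rightarrow> bool" where
  "is_cyclic_graph V cyc E \<longleftrightarrow>
     (\<exists>D. cyclic_digraph V cyc D \<and> (\<forall>x y. E x y \<longleftrightarrow> D x y \<or> D y x))"

definition is_cone :: "'a set \<Rightarrow> ('a \<Rightarrow> 'a \<Rightarrow> bool) \<Rightarrow> bool" where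
  "is_cone V E \<longleftrightarrow> (\<exists>v\<in>V. \<forall>w\<in>V. w \<noteq> v \<longrightarrow> E v w)"

end

theory Submission
  imports Defs
begin

text \<open>For a point p of the curve, the distance to p has no strict local minimum in the
  interior of the arc from p around to p. Otherwise a point x just outside the convex hull
  and close to p would have a locally nearest point q on that arc, and x lies on the normal
  line at q. The evolute hypothesis forces x to the outer side of the tangent at q, which
  makes q nearer than x to every point of the curve, p included; this is absurd since x is
  arbitrarily close to p.

  If VR(C;r) is not a cone,
  every point has a partner at distance greater than r, and a connectedness argument shows
  that for every edge {x, y} exactly one of the two arcs between x and y has diameter at
  most r. Orienting each edge along that arc yields a cyclic graph.\<close>

lemma has_real_derivative_inner:
  fixes f g :: "real \<Rightarrow> 'a::real_inner"
  assumes "(f has_vector_derivative f') (at t)" "(g has_vector_derivative g') (at t)"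
  shows "((\<lambda>u. f u \<bullet> g u) has_real_derivative f' \<bullet> g t + f t \<bullet> g') (at t)"
  using has_derivative_inner[OF assms[unfolded has_vector_derivative_def]]
  unfolding has_field_derivative_def
  by (rule has_derivative_eq_rhs) (auto simp: fun_eq_iff algebra_simps inner_commute)

lemma orthonormal_pair_expand:
  fixes u v w :: "'a::euclidean_space"
  assumes dim: "DIM('a) = 2" and "norm u = 1" "norm v = 1" "u \<bullet> v = 0"
  shows "w = (w \<bullet> u) *\<^sub>R u + (w \<bullet> v) *\<^sub>R v"
proof -
  have uv: "u \<noteq> v" "pairwise orthogonal {u, v}"
    using assms by (auto simp: pairwise_insert orthogonal_def inner_commute)
  have "independent {u, v}"
    using assms uv by (intro pairwise_orthogonal_independent) auto
  then have "UNIV \<subseteq> span {u, v}"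
    using dim uv(1) by (intro card_ge_dim_independent) auto
  then have "(\<Sum>i\<in>{u, v}. (w \<bullet> i) *\<^sub>R i) = w"
    using assms uv by (intro orthonormal_basis_expand) auto
  then show ?thesis using uv(1) by simp
qed

lemma DERIV_sign_change_imp_decreasing_right:
  fixes f h c :: "real \<Rightarrow> real"
  assumes f: "\<And>u. (f has_real_derivative c u * h u) (at u)" and c: "\<And>u. c u > 0"
    and h: "(h has_real_derivative h') (at t)" "h t = 0" "h' < 0" and "d > 0"
  shows "\<exists>u. t < u \<and> u < t + d \<and> f u < f t"
proof -
  obtain e where e: "e > 0" "\<And>k. 0 < k \<Longrightarrow> k < e \<Longrightarrow> h (t + k) < h t"
    using DERIV_neg_dec_right[OF h(1,3)] by blast
  define b where "b = t + min d e / 2"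
  have b: "t < b" "b < t + d" "b < t + e" using \<open>d > 0\<close> e(1) by (auto simp: b_def)
  obtain z where z: "t < z" "z < b" "f b - f t = (b - t) * (c z * h z)"
    using MVT2[OF b(1) f] by blast
  have "h z < 0" using e(2)[of "z - t"] z b h(2) by simp
  then have "c z * h z < 0" using c by (simp add: mult_pos_neg)
  then have "(b - t) * (c z * h z) < 0" using b by (simp add: mult_pos_neg)
  then have "f b < f t" using z by linarith
  then show ?thesis using b by blast
qed

locale periodic_loop =
  fixes \<alpha> :: "real \<Rightarrow> 'a" and L :: real
  assumes period_pos: "0 < L"
    and periodic: "\<alpha> (t + L) = \<alpha> t"
begin

lemma periodic_minus: "\<alpha> (t - L) = \<alpha> t"
  using periodic[of "t - L"] by simp

lemma periodic_int: "\<alpha> (t + of_int k * L) = \<alpha> t"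
proof (induction k rule: int_induct[where k = 0])
  case (step1 i)
  then show ?case using periodic[of "t + of_int i * L"] by (simp add: algebra_simps)
next
  case (step2 i)
  then show ?case using periodic_minus[of "t + of_int i * L"] by (simp add: algebra_simps)
qed simp

lemma shift_into_period: "\<exists>k::int. s \<le> t + of_int k * L \<and> t + of_int k * L < s + L"
proof -
  define k where "k = - \<lfloor>(t - s) / L\<rfloor>"
  have "of_int \<lfloor>(t - s) / L\<rfloor> * L \<le> t - s" "t - s < (of_int \<lfloor>(t - s) / L\<rfloor> + 1) * L"
    using period_pos floor_divide_lower floor_divide_upper by blast+
  then show ?thesis by (intro exI[of _ k]) (simp add: k_def algebra_simps)
qed

lemma param_in_period: "\<exists>t'. s \<le> t' \<and> t' < s + L \<and> \<alpha> t' = \<alpha> t"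
  using shift_into_period[of s t] periodic_int by metis

lemma range_eq_image_period: "range \<alpha> = \<alpha> ` {s..s + L}"
proof -
  have "\<alpha> t \<in> \<alpha> ` {s..s + L}" for t
    using param_in_period[of s t] by (metis atLeastAtMost_iff image_eqI less_imp_le)
  then show ?thesis by blast
qed

end

locale simple_loop = periodic_loop +
  assumes simple: "a < b \<Longrightarrow> b < a + L \<Longrightarrow> \<alpha> a \<noteq> \<alpha> b"
begin

lemma param_eq_shift:
  assumes "\<alpha> a = \<alpha> b"
  obtains k :: int where "b = a + of_int k * L"
proof -
  obtain k :: int where k: "a \<le> b + of_int k * L" "b + of_int k * L < a + L"
    using shift_into_period by blast
  have "\<alpha> a = \<alpha> (b + of_int k * L)" using assms periodic_int by simp
  then have "b + of_int k * L = a" using simple[of a "b + of_int k * L"] k by fastforce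
  then show thesis using that[of "- k"] by (simp add: algebra_simps)
qed

lemma param_unique_in_period:
  assumes "a \<in> {s..<s + L}" "b \<in> {s..<s + L}" "\<alpha> a = \<alpha> b"
  shows "a = b"
  using simple[of a b] simple[of b a] assms by (cases a b rule: linorder_cases) auto

end

lemma closed_param_imp_simple_loop:
  assumes "closed_param \<alpha> L"
  shows "simple_loop \<alpha> L"
proof -
  interpret periodic_loop \<alpha> L
    using assms by unfold_locales (auto simp: closed_param_def)
  have inj: "inj_on \<alpha> {0..<L}" using assms by (simp add: closed_param_def)
  show ?thesis
  proof unfold_locales
    fix a b assume ab: "a < b" "b < a + L"
    obtain k :: int where k: "0 \<le> a + of_int k * L" "a + of_int k * L < L"
      using shift_into_period by fastforce
    define a' b' where "a' = a + of_int k * L" and "b' = b + of_int k * L"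
    show "\<alpha> a \<noteq> \<alpha> b"
    proof
      assume "\<alpha> a = \<alpha> b"
      then have eq: "\<alpha> a' = \<alpha> b'" "\<alpha> a' = \<alpha> (b' - L)"
        by (simp_all add: a'_def b'_def periodic_int periodic_minus)
      show False
      proof (cases "b' < L")
        case True
        then show False using inj_onD[OF inj eq(1)] k ab by (simp add: a'_def b'_def)
      next
        case False
        then show False using inj_onD[OF inj eq(2)] k ab by (simp add: a'_def b'_def)
      qed
    qed
  qed
qed

locale quasiconcave_loop = simple_loop \<alpha> L for \<alpha> :: "real \<Rightarrow> 'a::metric_space" and L +
  assumes continuous: "continuous_on UNIV \<alpha>"
    and dist_quasiconcave: "s < t1 \<Longrightarrow> t1 < t2 \<Longrightarrow> t2 < t3 \<Longrightarrow> t3 < s + L \<Longrightarrow>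
      min (dist (\<alpha> s) (\<alpha> t1)) (dist (\<alpha> s) (\<alpha> t3)) \<le> dist (\<alpha> s) (\<alpha> t2)"
begin

lemma quasiconcave_loop_reversed: "quasiconcave_loop (\<lambda>t. \<alpha> (- t)) L"
proof unfold_locales
  show "0 < L" by (rule period_pos)
  show "\<alpha> (- (t + L)) = \<alpha> (- t)" for t using periodic_minus[of "- t"] by simp
  show "\<alpha> (- a) \<noteq> \<alpha> (- b)" if "a < b" "b < a + L" for a b
    using simple[of "- b" "- a"] that by auto
  show "continuous_on UNIV (\<lambda>t. \<alpha> (- t))"
    by (intro continuous_on_compose2[OF continuous] continuous_intros) auto
  fix s t1 t2 t3 assume "s < t1" "t1 < t2" "t2 < t3" "t3 < s + L"
  then have "min (dist (\<alpha> (- s - L)) (\<alpha> (- t3))) (dist (\<alpha> (- s - L)) (\<alpha> (- t1)))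
      \<le> dist (\<alpha> (- s - L)) (\<alpha> (- t2))"
    by (intro dist_quasiconcave) auto
  then show "min (dist (\<alpha> (- s)) (\<alpha> (- t1))) (dist (\<alpha> (- s)) (\<alpha> (- t3))) \<le> dist (\<alpha> (- s)) (\<alpha> (- t2))"
    using periodic_minus[of "- s"] by (simp add: min.commute)
qed

end

locale VR_loop = quasiconcave_loop +
  fixes r :: real
  assumes radius_nonneg: "0 \<le> r"
begin

declare periodic [simp] periodic_minus [simp]

abbreviation far :: "real \<Rightarrow> real \<Rightarrow> bool" where
  "far s t \<equiv> r < dist (\<alpha> s) (\<alpha> t)"

lemma far_irrefl: "\<not> far s s"
  using radius_nonneg by simp

lemma far_between:
  assumes "s < t1" "t1 < t2" "t2 < t3" "t3 < s + L" "far s t1" "far s t3"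
  shows "far s t2"
  using dist_quasiconcave[OF assms(1-4)] assms(5,6) by linarith

lemma open_far_before: "open {z. \<exists>w. z < w \<and> w < t \<and> far z w}"
  by (intro open_Collect_ex open_Collect_conj open_Collect_less continuous_intros
      continuous_on_compose2[OF continuous]) auto

lemma open_far_after: "open {z. \<exists>w. t < w \<and> w < z + L \<and> far z w}"
  by (intro open_Collect_ex open_Collect_conj open_Collect_less continuous_intros
      continuous_on_compose2[OF continuous]) auto

definition small_arc :: "real \<Rightarrow> real \<Rightarrow> bool" where
  "small_arc a b \<longleftrightarrow> (\<forall>p\<in>{a..b}. \<forall>q\<in>{a..b}. \<not> far p q)"

lemma small_arc_subarc: "small_arc a b \<Longrightarrow> a \<le> a' \<Longrightarrow> b' \<le> b \<Longrightarrow> small_arc a' b'"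
  by (auto simp: small_arc_def)

lemma small_arc_shift: "small_arc (a + of_int k * L) (b + of_int k * L) \<longleftrightarrow> small_arc a b"
proof -
  have "(\<forall>p\<in>{a + of_int k * L..b + of_int k * L}. P p) \<longleftrightarrow> (\<forall>p\<in>{a..b}. P (p + of_int k * L))"
    for P :: "real \<Rightarrow> bool"
    by (metis add_le_cancel_right atLeastAtMost_iff diff_add_cancel)
  then show ?thesis by (simp add: small_arc_def periodic_int)
qed

lemma not_small_arc:
  assumes "\<not> small_arc a b"
  obtains p q where "a \<le> p" "p < q" "q \<le> b" "far p q"
proof -
  obtain p q where pq: "p \<in> {a..b}" "q \<in> {a..b}" "far p q"
    using assms unfolding small_arc_def by blast
  then have "p \<noteq> q" using far_irrefl by auto
  then show thesis
    using that[of p q] that[of q p] pq by (cases "p < q") (auto simp: dist_commute)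
qed

definition arc_edge :: "'a \<Rightarrow> 'a \<Rightarrow> bool" where
  "arc_edge x y \<longleftrightarrow> x \<noteq> y \<and> (\<exists>s t. \<alpha> s = x \<and> \<alpha> t = y \<and> s < t \<and> t < s + L \<and> small_arc s t)"

lemma arc_edge_iff_small_arc:
  assumes "s < t" "t < s + L"
  shows "arc_edge (\<alpha> s) (\<alpha> t) \<longleftrightarrow> small_arc s t"
proof
  assume "arc_edge (\<alpha> s) (\<alpha> t)"
  then obtain s1 t1 where st1: "\<alpha> s1 = \<alpha> s" "\<alpha> t1 = \<alpha> t" "s1 < t1" "t1 < s1 + L" "small_arc s1 t1"
    unfolding arc_edge_def by blast
  obtain k :: int where k: "s1 = s + of_int k * L" using param_eq_shift[OF st1(1)[symmetric]] .
  define t0 where "t0 = t1 - of_int k * L"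
  have "\<alpha> t0 = \<alpha> t" using st1(2) periodic_int[of t0 k] by (simp add: t0_def)
  then have "t0 = t" using param_unique_in_period[of t0 s t] assms st1 k by (simp add: t0_def)
  then have "t1 = t + of_int k * L" by (simp add: t0_def)
  then show "small_arc s t" using st1(5) small_arc_shift[of s k t] k by simp
next
  assume "small_arc s t"
  then show "arc_edge (\<alpha> s) (\<alpha> t)" using simple assms unfolding arc_edge_def by blast
qed

lemma arc_edge_cyclic:
  assumes "s < t" "t < u" "u < s + L" "arc_edge (\<alpha> s) (\<alpha> u)"
  shows "arc_edge (\<alpha> s) (\<alpha> t) \<and> arc_edge (\<alpha> t) (\<alpha> u)"
proof -
  have "small_arc s u" using assms arc_edge_iff_small_arc by simp
  then show ?thesis using assms by (simp add: arc_edge_iff_small_arc small_arc_subarc)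
qed

lemma arc_edge_imp_near:
  assumes "arc_edge x y"
  shows "dist x y \<le> r"
proof -
  obtain s t where st: "\<alpha> s = x" "\<alpha> t = y" "s < t" "small_arc s t"
    using assms unfolding arc_edge_def by blast
  have "\<not> far s t" using st(3,4) unfolding small_arc_def by simp
  then show ?thesis using st by simp
qed

end

locale coneless_VR_loop = VR_loop +
  assumes far_partner: "\<exists>w. far z w"
begin

lemma coneless_VR_loop_reversed: "coneless_VR_loop (\<lambda>t. \<alpha> (- t)) L r"
proof -
  have "\<exists>w. r < dist (\<alpha> (- z)) (\<alpha> (- w))" for z
    using far_partner[of "- z"] by (metis minus_minus)
  then show ?thesis
    using quasiconcave_loop_reversed radius_nonneg
    by (simp add: coneless_VR_loop_def coneless_VR_loop_axioms_def VR_loop_def VR_loop_axioms_def)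
qed

lemma far_partner_in_period:
  obtains w where "s < w" "w < s + L" "far s w"
proof -
  obtain w0 where "far s w0" using far_partner by blast
  moreover obtain w where w: "s \<le> w" "w < s + L" "\<alpha> w = \<alpha> w0" using param_in_period by blast
  ultimately have "far s w" by simp
  moreover have "w \<noteq> s" using \<open>far s w\<close> far_irrefl by auto
  ultimately show thesis using that[of w] w by auto
qed

text \<open>Each z in [s, t] has its far partners in an interval avoiding t, hence either
  all before t or all after t; both alternatives are open conditions on z.\<close>
lemma no_far_crossing:
  assumes st: "s < t" "t < s + L" "\<not> far s t"
    and v: "s < v" "v < t" "far s v"
    and u: "t < u" "u < s + L" "far t u"
  shows False
proof -
  have near_t: "\<not> far z t" if "s \<le> z" "z \<le> t" for z
  proof
    assume "far z t"
    then have z: "s < z" "z < t" using that st(3) far_irrefl by (auto simp: order.order_iff_strict)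
    have "far t (z + L)" using \<open>far z t\<close> by (simp add: dist_commute)
    then have "far t (s + L)" using far_between[of t u "s + L" "z + L"] u z by auto
    then show False using st(3) by (simp add: dist_commute)
  qed
  define A where "A = {z. \<exists>w. z < w \<and> w < t \<and> far z w}"
  define B where "B = {z. \<exists>w. t < w \<and> w < z + L \<and> far z w}"
  have "A \<inter> B \<inter> {s..t} = {}"
  proof (intro equals0I)
    fix z assume "z \<in> A \<inter> B \<inter> {s..t}"
    then obtain w1 w2 where "s \<le> z" "z < w1" "w1 < t" "far z w1" "t < w2" "w2 < z + L" "far z w2"
      unfolding A_def B_def by auto
    then show False using far_between[of z w1 t w2] near_t by auto
  qed
  moreover have "{s..t} \<subseteq> A \<union> B"
  proof
    fix z assume z: "z \<in> {s..t}"
    obtain w where w: "z < w" "w < z + L" "far z w" by (rule far_partner_in_period)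
    have "w \<noteq> t" using w(3) near_t z far_irrefl by auto
    then show "z \<in> A \<union> B" using w unfolding A_def B_def by (cases "w < t") auto
  qed
  moreover have "s \<in> A \<inter> {s..t}" "t \<in> B \<inter> {s..t}" using v u st unfolding A_def B_def by auto
  moreover have "open A" "open B" unfolding A_def B_def by (fact open_far_before open_far_after)+
  ultimately show False using connectedD[OF connected_Icc, of A B s t] by blast
qed

lemma no_far_crossing_reversed:
  assumes st: "s < t" "t < s + L" "\<not> far s t"
    and v: "s < v" "v < t" "far t v"
    and u: "t < u" "u < s + L" "far s u"
  shows False
proof -
  interpret rev: coneless_VR_loop "\<lambda>t. \<alpha> (- t)" L r by (rule coneless_VR_loop_reversed)
  show False
    using rev.no_far_crossing[of "- t" "- s" "- v" "L - u"] st v u by (simp add: dist_commute)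
qed

lemma far_points_on_one_arc:
  assumes st: "s < t" "t < s + L" "\<not> far s t"
    and v: "s < v" "v < t" "far s v \<or> far t v"
    and u: "t < u" "u < s + L" "far s u \<or> far t u"
  shows False
proof -
  consider "far s v" "far s u" | "far t v" "far t u" | "far s v" "far t u" | "far t v" "far s u"
    using v(3) u(3) by blast
  then show False
  proof cases
    case 1
    then show False using far_between[of s v t u] v u st by auto
  next
    case 2
    then have "far t (s + L)" using far_between[of t u "s + L" "v + L"] v u st by auto
    then show False using st(3) by (simp add: dist_commute)
  next
    case 3
    then show False using no_far_crossing[OF st] v u by blast
  next
    case 4
    then show False using no_far_crossing_reversed[OF st] v u by blast
  qed
qed

lemma small_arc_if_no_far_inside:
  assumes st: "s < t" "t < s + L" "\<not> far s t"
    and inside: "\<And>v. s < v \<Longrightarrow> v < t \<Longrightarrow> \<not> far s v \<and> \<not> far t v"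
  shows "small_arc s t"
proof (rule ccontr)
  assume "\<not> small_arc s t"
  then obtain p q where pq: "s \<le> p" "p < q" "q \<le> t" "far p q" by (rule not_small_arc)
  have near_s: "\<not> far s z" if "s \<le> z" "z \<le> t" for z
    using inside[of z] st(3) far_irrefl that by (cases "z = s \<or> z = t") auto
  obtain w where w: "s < w" "w < s + L" "far s w" by (rule far_partner_in_period)
  have "t < w" using near_s[of w] w by fastforce
  have "s < p" using near_s[of q] pq by (auto simp: order.order_iff_strict)
  show False
    using far_points_on_one_arc[of s q p w] pq st w \<open>s < p\<close> \<open>t < w\<close> near_s[of q]
    by (auto simp: dist_commute)
qed

lemma near_pair_small_arc:
  assumes st: "s < t" "t < s + L" "\<not> far s t"
  shows "small_arc s t \<or> small_arc t (s + L)"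
proof (cases "\<exists>v. s < v \<and> v < t \<and> (far s v \<or> far t v)")
  case True
  then obtain v where v: "s < v" "v < t" "far s v \<or> far t v" by blast
  have "\<not> far t u \<and> \<not> far (s + L) u" if "t < u" "u < s + L" for u
    using far_points_on_one_arc[OF st v] that by auto
  then have "small_arc t (s + L)"
    using st by (intro small_arc_if_no_far_inside) (auto simp: dist_commute)
  then show ?thesis ..
next
  case False
  then have "small_arc s t"
    using st by (intro small_arc_if_no_far_inside) auto
  then show ?thesis ..
qed

lemma arc_edge_asym:
  assumes "arc_edge x y"
  shows "\<not> arc_edge y x"
proof
  assume "arc_edge y x"
  obtain s t where st: "\<alpha> s = x" "\<alpha> t = y" "s < t" "t < s + L" "small_arc s t"
    using \<open>arc_edge x y\<close> unfolding arc_edge_def by blast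
  have "small_arc t (s + L)"
    using \<open>arc_edge y x\<close> arc_edge_iff_small_arc[of t "s + L"] st by simp
  obtain w where w: "s < w" "w < s + L" "far s w" by (rule far_partner_in_period)
  show False
  proof (cases "w \<le> t")
    case True
    then show False using st(5) w unfolding small_arc_def by auto
  next
    case False
    then have "w \<in> {t..s + L}" "s + L \<in> {t..s + L}" using w st by auto
    then have "\<not> far (s + L) w"
      using \<open>small_arc t (s + L)\<close> unfolding small_arc_def by blast
    then show False using w by simp
  qed
qed

lemma near_iff_arc_edge:
  assumes "x \<in> range \<alpha>" "y \<in> range \<alpha>" "x \<noteq> y"
  shows "dist x y \<le> r \<longleftrightarrow> arc_edge x y \<or> arc_edge y x"
proof
  obtain s where s: "\<alpha> s = x" using assms(1) by blast
  obtain t where t: "s \<le> t" "t < s + L" "\<alpha> t = y"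
    using assms(2) param_in_period[of s] by blast
  have st: "s < t" using s t assms(3) by (auto simp: order.order_iff_strict)
  assume "dist x y \<le> r"
  then have "small_arc s t \<or> small_arc t (s + L)"
    using near_pair_small_arc[OF st t(2)] s t by simp
  then show "arc_edge x y \<or> arc_edge y x"
    using arc_edge_iff_small_arc[of s t] arc_edge_iff_small_arc[of t "s + L"] s t st by auto
next
  assume "arc_edge x y \<or> arc_edge y x"
  then show "dist x y \<le> r" using arc_edge_imp_near by (metis dist_commute)
qed

end

lemma VR_graph_cyclic_or_cone:
  fixes \<alpha> :: "real \<Rightarrow> pt"
  assumes "VR_loop \<alpha> L r"
  shows "is_cyclic_graph (range \<alpha>) (cyc_order \<alpha> L) (VR_edge (range \<alpha>) r)
    \<or> is_cone (range \<alpha>) (VR_edge (range \<alpha>) r)"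
proof (rule disjCI)
  interpret VR_loop \<alpha> L r by (fact assms)
  assume "\<not> is_cone (range \<alpha>) (VR_edge (range \<alpha>) r)"
  then have "\<exists>w. far z w" for z
    unfolding is_cone_def VR_edge_def by (metis not_le rangeE rangeI)
  then interpret coneless_VR_loop \<alpha> L r by unfold_locales
  have "arc_edge x y \<Longrightarrow> x \<in> range \<alpha> \<and> y \<in> range \<alpha> \<and> x \<noteq> y \<and> \<not> arc_edge y x" for x y
    using arc_edge_asym unfolding arc_edge_def by blast
  moreover have "cyc_order \<alpha> L x y z \<Longrightarrow> arc_edge x z \<Longrightarrow> arc_edge x y \<and> arc_edge y z" for x y z
    unfolding cyc_order_def using arc_edge_cyclic by blast
  ultimately have "cyclic_digraph (range \<alpha>) (cyc_order \<alpha> L) arc_edge"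
    unfolding cyclic_digraph_def by blast
  moreover have "VR_edge (range \<alpha>) r x y \<longleftrightarrow> arc_edge x y \<or> arc_edge y x" for x y
    using near_iff_arc_edge unfolding VR_edge_def arc_edge_def by auto
  ultimately show "is_cyclic_graph (range \<alpha>) (cyc_order \<alpha> L) (VR_edge (range \<alpha>) r)"
    unfolding is_cyclic_graph_def by blast
qed

lemma strictly_convex_curve_convex_body:
  assumes "strictly_convex_curve C" "x \<in> C" "y \<in> C" "x \<noteq> y"
  obtains Y where "convex Y" "C = frontier Y" "interior Y \<noteq> {}"
proof -
  obtain Y where CY: "C = frontier Y"
    and strict: "\<And>y y' t. y \<in> Y \<Longrightarrow> y' \<in> Y \<Longrightarrow> 0 < t \<Longrightarrow> t < 1 \<Longrightarrow> t *\<^sub>R y + (1 - t) *\<^sub>R y' \<in> interior Y"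
    using assms(1) unfolding strictly_convex_curve_def by blast
  have "convex Y"
    unfolding convex_alt
  proof (intro ballI allI impI)
    fix y y' and u :: real assume "y \<in> Y" "y' \<in> Y" "0 \<le> u \<and> u \<le> 1"
    then show "(1 - u) *\<^sub>R y + u *\<^sub>R y' \<in> Y"
      using strict[of y y' "1 - u"] interior_subset by (cases "u = 0 \<or> u = 1") auto
  qed
  have "\<not> Y \<subseteq> {z}" for z
  proof
    assume "Y \<subseteq> {z}"
    then have "closed Y" using finite_subset finite_imp_closed by blast
    then have "C \<subseteq> {z}" using CY \<open>Y \<subseteq> {z}\<close> by (auto simp: frontier_def)
    then show False using assms by blast
  qed
  then obtain y1 y2 where "y1 \<in> Y" "y2 \<in> Y" "y1 \<noteq> y2" by blast
  then have "interior Y \<noteq> {}" using strict[of y1 y2 "1/2"] by auto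
  then show thesis using that \<open>convex Y\<close> CY by blast
qed

locale convex_curve =
  fixes \<alpha> :: "real \<Rightarrow> pt" and L :: real
  assumes closed: "closed_param \<alpha> L"
    and strictly_convex: "strictly_convex_curve (range \<alpha>)"
    and differentiable: "\<And>t. \<alpha> differentiable (at t)"
    and regular: "\<And>t. vector_derivative \<alpha> (at t) \<noteq> 0"
    and tangent_differentiable: "\<And>t. unit_tangent \<alpha> differentiable (at t)"
    and curvature_pos: "\<And>t. curvature \<alpha> t > 0"
    and evolute_in_hull: "evolute \<alpha> \<subseteq> convex hull (range \<alpha>)"
begin

sublocale simple_loop \<alpha> L
  by (rule closed_param_imp_simple_loop[OF closed])

abbreviation "T \<equiv> unit_tangent \<alpha>"
abbreviation "N \<equiv> unit_normal \<alpha>"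
abbreviation "\<kappa> \<equiv> curvature \<alpha>"
abbreviation "velocity t \<equiv> vector_derivative \<alpha> (at t)"
abbreviation "T' t \<equiv> vector_derivative T (at t)"

lemma velocity: "(\<alpha> has_vector_derivative velocity t) (at t)"
  using differentiable vector_derivative_works by blast

lemma tangent_derivative: "(T has_vector_derivative T' t) (at t)"
  using tangent_differentiable vector_derivative_works by blast

lemma continuous_curve: "continuous_on S \<alpha>"
  using differentiable differentiable_imp_continuous_within continuous_at_imp_continuous_on by blast

lemma speed_pos: "norm (velocity t) > 0"
  using regular by simp

lemma velocity_eq: "velocity t = norm (velocity t) *\<^sub>R T t"
  using speed_pos[of t] by (simp add: unit_tangent_def)

lemma norm_T: "norm (T t) = 1"
  using speed_pos[of t] by (simp add: unit_tangent_def)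

lemma T_orthogonal_T': "T t \<bullet> T' t = 0"
proof -
  have "((\<lambda>u. T u \<bullet> T u) has_real_derivative T' t \<bullet> T t + T t \<bullet> T' t) (at t)"
    by (rule has_real_derivative_inner[OF tangent_derivative tangent_derivative])
  moreover have "(\<lambda>u. T u \<bullet> T u) = (\<lambda>u. 1)" using norm_T by (simp add: dot_square_norm)
  ultimately have "T' t \<bullet> T t + T t \<bullet> T' t = 0" using DERIV_unique DERIV_const by metis
  then show ?thesis by (simp add: inner_commute)
qed

lemma norm_T': "norm (T' t) = \<kappa> t * norm (velocity t)"
  using speed_pos[of t] by (simp add: curvature_def)

lemma T'_eq: "T' t = (\<kappa> t * norm (velocity t)) *\<^sub>R N t"
  using curvature_pos[of t] speed_pos[of t] by (simp add: unit_normal_def norm_T'[symmetric])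

lemma norm_N: "norm (N t) = 1"
  using curvature_pos[of t] speed_pos[of t] by (simp add: unit_normal_def norm_T')

lemma T_orthogonal_N: "T t \<bullet> N t = 0"
  using T_orthogonal_T' by (simp add: unit_normal_def)

lemma frame_expand: "w = (w \<bullet> T t) *\<^sub>R T t + (w \<bullet> N t) *\<^sub>R N t"
  by (rule orthonormal_pair_expand[OF _ norm_T norm_N T_orthogonal_N]) simp

lemma convex_body_of_curve:
  obtains Y where "convex Y" "range \<alpha> = frontier Y" "interior Y \<noteq> {}"
proof -
  have "\<alpha> 0 \<noteq> \<alpha> (L / 2)" using simple[of 0 "L / 2"] period_pos by simp
  then show thesis
    using strictly_convex_curve_convex_body[OF strictly_convex] that by blast
qed

lemma curve_not_in_interior_hull: "\<alpha> t \<notin> interior (convex hull range \<alpha>)"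
proof -
  obtain Y where Y: "convex Y" "range \<alpha> = frontier Y" by (rule convex_body_of_curve)
  then have "convex hull range \<alpha> \<subseteq> closure Y"
    by (intro hull_minimal convex_closure) (auto simp: frontier_def)
  then have "interior (convex hull range \<alpha>) \<subseteq> interior Y"
    using interior_mono convex_interior_closure[OF Y(1)] by blast
  then show ?thesis using Y(2) by (auto simp: frontier_def)
qed

lemma supporting_functional:
  obtains a where "a \<noteq> 0" "\<And>y. y \<in> range \<alpha> \<Longrightarrow> a \<bullet> \<alpha> t \<le> a \<bullet> y"
proof -
  obtain Y where Y: "convex Y" "range \<alpha> = frontier Y" "interior Y \<noteq> {}"
    by (rule convex_body_of_curve)
  have "\<alpha> t \<in> closure Y" "\<alpha> t \<notin> rel_interior Y"
    using Y(2,3) rel_interior_nonempty_interior[OF Y(3)] by (auto simp: frontier_def)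
  then show thesis
    using supporting_hyperplane_relative_frontier[OF Y(1)] that Y(2)
    by (metis closure_Un_frontier UnI2)
qed

lemma normal_points_inward:
  assumes "y \<in> range \<alpha>"
  shows "0 \<le> (y - \<alpha> t) \<bullet> N t"
proof -
  obtain a where a: "a \<noteq> 0" "\<And>y. y \<in> range \<alpha> \<Longrightarrow> a \<bullet> \<alpha> t \<le> a \<bullet> y"
    using supporting_functional[of t] by blast
  have height: "((\<lambda>u. a \<bullet> \<alpha> u) has_real_derivative norm (velocity u) * (a \<bullet> T u)) (at u)" for u
    using has_real_derivative_inner[OF has_vector_derivative_const velocity, of a]
    by (subst (asm) velocity_eq) simp
  have slope: "((\<lambda>u. a \<bullet> T u) has_real_derivative \<kappa> t * norm (velocity t) * (a \<bullet> N t)) (at t)"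
    using has_real_derivative_inner[OF has_vector_derivative_const tangent_derivative, of a]
    by (simp add: T'_eq)
  have "norm (velocity t) * (a \<bullet> T t) = 0"
    using DERIV_local_min[OF height, of 1] a(2) by auto
  then have "a \<bullet> T t = 0" using speed_pos[of t] by simp
  then have a_normal: "a = (a \<bullet> N t) *\<^sub>R N t" using frame_expand[of a t] by simp
  have "\<not> a \<bullet> N t < 0"
  proof
    assume "a \<bullet> N t < 0"
    then have "\<kappa> t * norm (velocity t) * (a \<bullet> N t) < 0"
      using curvature_pos speed_pos by (simp add: mult_pos_neg)
    then obtain u where "a \<bullet> \<alpha> u < a \<bullet> \<alpha> t"
      using DERIV_sign_change_imp_decreasing_right[OF height speed_pos slope \<open>a \<bullet> T t = 0\<close>, of 1]
      by auto
    then show False using a(2)[of "\<alpha> u"] by simp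
  qed
  moreover have "a \<bullet> N t \<noteq> 0" using a(1) a_normal by (metis scaleR_zero_left)
  ultimately have "0 < a \<bullet> N t" by simp
  moreover have "0 \<le> a \<bullet> (y - \<alpha> t)" using a(2)[OF assms] by (simp add: inner_diff_right)
  moreover have "a \<bullet> (y - \<alpha> t) = (a \<bullet> N t) * ((y - \<alpha> t) \<bullet> N t)"
    by (subst a_normal) (simp add: inner_commute)
  ultimately show ?thesis by (simp add: zero_le_mult_iff)
qed

lemma dist_sq_derivative:
  "((\<lambda>u. (\<alpha> u - x) \<bullet> (\<alpha> u - x)) has_real_derivative
    (2 * norm (velocity u)) * ((\<alpha> u - x) \<bullet> T u)) (at u)"
proof -
  have "((\<lambda>u. \<alpha> u - x) has_vector_derivative velocity u) (at u)"
    using has_vector_derivative_diff[OF velocity has_vector_derivative_const] by simp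
  from has_real_derivative_inner[OF this this] show ?thesis
    by (subst (asm) (1 2) velocity_eq) (simp add: inner_commute mult.assoc)
qed

lemma tangential_derivative:
  "((\<lambda>u. (\<alpha> u - x) \<bullet> T u) has_real_derivative norm (velocity u) + (\<alpha> u - x) \<bullet> T' u) (at u)"
proof -
  have "((\<lambda>u. \<alpha> u - x) has_vector_derivative velocity u) (at u)"
    using has_vector_derivative_diff[OF velocity has_vector_derivative_const] by simp
  from has_real_derivative_inner[OF this tangent_derivative] show ?thesis
    by (subst (asm) velocity_eq) (simp add: norm_T dot_square_norm)
qed

lemma local_min_dist_tangential:
  assumes "0 < d" "\<And>u. \<bar>u - t\<bar> < d \<Longrightarrow> dist (\<alpha> t) x \<le> dist (\<alpha> u) x"
  shows "(\<alpha> t - x) \<bullet> T t = 0"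
proof -
  have "\<forall>u. \<bar>t - u\<bar> < d \<longrightarrow> (\<alpha> t - x) \<bullet> (\<alpha> t - x) \<le> (\<alpha> u - x) \<bullet> (\<alpha> u - x)"
    using assms(2) by (auto simp: abs_minus_commute dot_square_norm dist_norm)
  then have "2 * norm (velocity t) * ((\<alpha> t - x) \<bullet> T t) = 0"
    using DERIV_local_min[OF dist_sq_derivative assms(1)] by blast
  then show ?thesis using speed_pos[of t] by simp
qed

lemma dist_le_beyond_outer_normal:
  assumes "c \<le> 0" "y \<in> range \<alpha>"
  shows "dist (\<alpha> t) y \<le> dist (\<alpha> t + c *\<^sub>R N t) y"
proof -
  have "(dist (\<alpha> t + c *\<^sub>R N t) y)\<^sup>2 = ((y - \<alpha> t) - c *\<^sub>R N t) \<bullet> ((y - \<alpha> t) - c *\<^sub>R N t)"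
    by (simp add: dist_norm power2_norm_eq_inner norm_minus_commute algebra_simps)
  also have "\<dots> = (y - \<alpha> t) \<bullet> (y - \<alpha> t) - 2 * c * ((y - \<alpha> t) \<bullet> N t) + c\<^sup>2 * (N t \<bullet> N t)"
    by (simp add: inner_diff_left inner_diff_right inner_commute power2_eq_square algebra_simps)
  also have "\<dots> = (dist (\<alpha> t) y)\<^sup>2 - 2 * c * ((y - \<alpha> t) \<bullet> N t) + c\<^sup>2"
    by (simp add: dot_square_norm norm_N dist_norm norm_minus_commute)
  finally have "(dist (\<alpha> t + c *\<^sub>R N t) y)\<^sup>2 = (dist (\<alpha> t) y)\<^sup>2 - 2 * c * ((y - \<alpha> t) \<bullet> N t) + c\<^sup>2" .
  moreover have "0 \<le> - 2 * c * ((y - \<alpha> t) \<bullet> N t)"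
    using assms normal_points_inward[OF assms(2)] by (simp add: mult_nonpos_nonneg)
  ultimately have "(dist (\<alpha> t) y)\<^sup>2 \<le> (dist (\<alpha> t + c *\<^sub>R N t) y)\<^sup>2"
    using zero_le_power2[of c] by linarith
  then show ?thesis by (simp add: power2_le_iff_abs_le)
qed

lemma normal_segment_in_hull:
  assumes "0 \<le> c" "c * \<kappa> t \<le> 1"
  shows "\<alpha> t + c *\<^sub>R N t \<in> convex hull range \<alpha>"
proof -
  have "center_of_curvature \<alpha> t \<in> convex hull range \<alpha>"
    using evolute_in_hull by (auto simp: evolute_def)
  moreover have "\<alpha> t \<in> convex hull range \<alpha>" by (simp add: hull_inc)
  ultimately have "(1 - c * \<kappa> t) *\<^sub>R \<alpha> t + (c * \<kappa> t) *\<^sub>R center_of_curvature \<alpha> t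
      \<in> convex hull range \<alpha>"
    using assms curvature_pos[of t] by (intro convexD) auto
  then show ?thesis
    using curvature_pos[of t] by (simp add: center_of_curvature_def algebra_simps)
qed

lemma dist_decreases_beyond_center:
  assumes "1 < c * \<kappa> t" "0 < d"
  obtains u where "t < u" "u < t + d" "dist (\<alpha> u) (\<alpha> t + c *\<^sub>R N t) < dist (\<alpha> t) (\<alpha> t + c *\<^sub>R N t)"
proof -
  define x where "x = \<alpha> t + c *\<^sub>R N t"
  have "norm (velocity t) + (\<alpha> t - x) \<bullet> T' t = norm (velocity t) * (1 - c * \<kappa> t)"
    using norm_N[of t] by (simp add: x_def T'_eq dot_square_norm algebra_simps)
  also have "\<dots> < 0" using assms speed_pos[of t] by (simp add: mult_pos_neg)
  finally have "norm (velocity t) + (\<alpha> t - x) \<bullet> T' t < 0" .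
  moreover have "(\<alpha> t - x) \<bullet> T t = 0" using T_orthogonal_N[of t] by (simp add: x_def inner_commute)
  moreover have "0 < 2 * norm (velocity u)" for u using speed_pos[of u] by simp
  ultimately obtain u where u: "t < u" "u < t + d" "(\<alpha> u - x) \<bullet> (\<alpha> u - x) < (\<alpha> t - x) \<bullet> (\<alpha> t - x)"
    using DERIV_sign_change_imp_decreasing_right[OF dist_sq_derivative _ tangential_derivative _ _ assms(2)]
    by blast
  then have "(dist (\<alpha> u) x)\<^sup>2 < (dist (\<alpha> t) x)\<^sup>2"
    by (simp add: dist_norm dot_square_norm)
  then have "dist (\<alpha> u) x < dist (\<alpha> t) x" by (rule power2_less_imp_less) simp
  then show thesis using that u by (simp add: x_def)
qed

text \<open>x lies on the normal line at \<alpha> t. Up to the centre of curvature the inner half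
  of that line stays in the convex hull, and beyond it \<alpha> t is no longer a local
  minimum; so x is on the outer side.\<close>
lemma locally_nearest_point_from_outside:
  assumes "x \<notin> convex hull range \<alpha>" "0 < d"
    and nearest: "\<And>u. \<bar>u - t\<bar> < d \<Longrightarrow> dist (\<alpha> t) x \<le> dist (\<alpha> u) x"
    and "y \<in> range \<alpha>"
  shows "dist (\<alpha> t) y \<le> dist x y"
proof -
  define c where "c = (x - \<alpha> t) \<bullet> N t"
  have "(x - \<alpha> t) \<bullet> T t = 0"
    using local_min_dist_tangential[OF assms(2) nearest] by (simp add: inner_diff_left)
  then have x: "x = \<alpha> t + c *\<^sub>R N t"
    using frame_expand[of "x - \<alpha> t" t] by (simp add: c_def algebra_simps)
  consider "c \<le> 0" | "0 \<le> c" "c * \<kappa> t \<le> 1" | "1 < c * \<kappa> t" by linarith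
  then show ?thesis
  proof cases
    case 1
    then show ?thesis using dist_le_beyond_outer_normal[OF _ assms(4)] x by simp
  next
    case 2
    then show ?thesis using normal_segment_in_hull assms(1) x by simp
  next
    case 3
    then obtain u where "t < u" "u < t + d" "dist (\<alpha> u) x < dist (\<alpha> t) x"
      using dist_decreases_beyond_center[OF 3 assms(2)] x by blast
    then show ?thesis using nearest[of u] by simp
  qed
qed

lemma outside_hull_near_curve:
  assumes "0 < e"
  obtains x where "dist x (\<alpha> s) < e" "x \<notin> convex hull range \<alpha>"
proof -
  have "\<not> ball (\<alpha> s) e \<subseteq> convex hull range \<alpha>"
    using curve_not_in_interior_hull assms mem_interior by blast
  then obtain x where "x \<in> ball (\<alpha> s) e" "x \<notin> convex hull range \<alpha>" by blast
  then show thesis using that by (simp add: dist_commute)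
qed

lemma dist_along_arc_quasiconcave:
  assumes "s < t1" "t1 < t2" "t2 < t3" "t3 < s + L"
  shows "min (dist (\<alpha> s) (\<alpha> t1)) (dist (\<alpha> s) (\<alpha> t3)) \<le> dist (\<alpha> s) (\<alpha> t2)"
proof (rule ccontr)
  define g where "g u = dist (\<alpha> s) (\<alpha> u)" for u
  assume "\<not> ?thesis"
  then have dip: "0 < min (g t1) (g t3) - g t2" by (simp add: g_def not_le)
  have g_cont: "continuous_on {t1..t3} g"
    unfolding g_def by (intro continuous_on_dist continuous_on_const continuous_curve)
  obtain tm where tm: "tm \<in> {t1..t3}" "\<And>u. u \<in> {t1..t3} \<Longrightarrow> g tm \<le> g u"
    using continuous_attains_inf[OF compact_Icc _ g_cont] assms by fastforce
  have "\<alpha> s \<noteq> \<alpha> tm" using simple[of s tm] tm assms by simp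
  then have "0 < g tm" by (simp add: g_def)
  define e where "e = min (g tm) ((min (g t1) (g t3) - g t2) / 2)"
  have "0 < e" using \<open>0 < g tm\<close> dip by (simp add: e_def)
  then obtain x where x: "dist x (\<alpha> s) < e" "x \<notin> convex hull range \<alpha>"
    by (rule outside_hull_near_curve)
  define q where "q u = dist (\<alpha> u) x" for u
  have tri: "q u \<le> g u + dist x (\<alpha> s)" "g u \<le> q u + dist x (\<alpha> s)" for u
    unfolding q_def g_def by (metis dist_commute dist_triangle)+
  have "2 * dist x (\<alpha> s) < g t1 - g t2" "2 * dist x (\<alpha> s) < g t3 - g t2"
    using x(1) by (auto simp: e_def)
  then have dip_q: "q t2 < q t1" "q t2 < q t3"
    using tri[of t1] tri[of t2] tri[of t3] by linarith+
  have q_cont: "continuous_on {t1..t3} q"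
    unfolding q_def by (intro continuous_on_dist continuous_on_const continuous_curve)
  obtain ts where ts: "ts \<in> {t1..t3}" "\<And>u. u \<in> {t1..t3} \<Longrightarrow> q ts \<le> q u"
    using continuous_attains_inf[OF compact_Icc _ q_cont] assms by fastforce
  have "q ts \<le> q t2" using ts(2) assms by simp
  then have "t1 < ts" "ts < t3" using ts(1) dip_q by (auto simp: order.order_iff_strict)
  define d where "d = min (ts - t1) (t3 - ts)"
  have "0 < d" using \<open>t1 < ts\<close> \<open>ts < t3\<close> by (simp add: d_def)
  have nearest: "dist (\<alpha> ts) x \<le> dist (\<alpha> u) x" if "\<bar>u - ts\<bar> < d" for u
    using ts(2)[of u] that unfolding q_def d_def by (auto simp: abs_less_iff)
  have "dist (\<alpha> ts) (\<alpha> s) \<le> dist x (\<alpha> s)"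
    using locally_nearest_point_from_outside[OF x(2) \<open>0 < d\<close> nearest, of "\<alpha> s"] by simp
  then have "g ts \<le> dist x (\<alpha> s)" by (simp add: g_def dist_commute)
  moreover have "e \<le> g ts" using tm(2)[OF ts(1)] by (simp add: e_def)
  ultimately show False using x(1) by simp
qed

lemma curve_quasiconcave_loop: "quasiconcave_loop \<alpha> L"
  by unfold_locales (use continuous_curve dist_along_arc_quasiconcave in auto)

end

theorem theorem1p3:
  fixes \<alpha> :: "real \<Rightarrow> real^2" and L :: real and C :: "(real^2) set"
  assumes param: "closed_param \<alpha> L"
    and C_def: "C = \<alpha> ` {0..L}"
    and scvx: "strictly_convex_curve C"
    and diff: "\<And>t. \<alpha> differentiable (at t)"
    and regular: "\<And>t. vector_derivative \<alpha> (at t) \<noteq> 0"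
    and diffT: "\<And>t. unit_tangent \<alpha> differentiable (at t)"
    and curv_pos: "\<And>t. curvature \<alpha> t > 0"
    and evol: "evolute \<alpha> \<subseteq> convex hull C"
    and r: "r \<ge> 0"
  shows "is_cyclic_graph C (cyc_order \<alpha> L) (VR_edge C r) \<or> is_cone C (VR_edge C r)"
proof -
  interpret simple_loop \<alpha> L by (rule closed_param_imp_simple_loop[OF param])
  have C: "C = range \<alpha>" using C_def range_eq_image_period[of 0] by simp
  interpret convex_curve \<alpha> L
    using assms by unfold_locales (simp_all add: C)
  have "VR_loop \<alpha> L r"
    using curve_quasiconcave_loop r by (simp add: VR_loop_def VR_loop_axioms_def)
  then show ?thesis unfolding C by (rule VR_graph_cyclic_or_cone)
qed

end
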